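(* Let $n\ge3$ and $i\ge0$. If $x^\Lambda\partial_k\in\mathcal{L}_i$, then $r_i>\mathrm{WD}(x^\Lambda\partial_k)$. In particular, if $1\le k<n-r_i+1$, then $\mathcal{L}_i\cap\mathcal{B}_k=\emptyset$.
   Context: Fix an integer $n\ge 3$. A partition is a sequence $\Lambda=(\lambda_j)_{j\ge1}$ of non-negative integers with finite support; $\mathrm{wt}(\Lambda)=\sum_j j\lambda_j$; $\mathrm{Part}(k)$ is the set of partitions with $\lambda_j=0$ for $j>k$. Write $x^\Lambda=\prod_j x_j^{\lambda_j}$, $\deg(x^\Lambda)=\sum_j\lambda_j$. $\mathcal{B}=\{x^\Lambda\partial_k : 1\le k\le n,\ \Lambda\in\mathrm{Part}(k-1)\}$ and $\mathcal{B}_u=\{x^\Lambda\partial_k\in\mathcal{B}: k=u\}$. For an integer $i\ge-1$, let $r_i\in\{1,\dots,n-1\}$ with $i\equiv r_i\pmod{n-1}$ and $h_i=\lfloor (i-1)/(n-1)\rfloor+1$. Define $\mathrm{WD}(x^\Lambda\partial_k)=\mathrm{wt}(\Lambda)-\deg(x^\Lambda)+n-k$ and $\mathrm{lev}_i(x^\Lambda\partial_k)=h_i\,\mathrm{WD}(x^\Lambda\partial_k)+\deg(x^\Lambda)-1$. For $i\ge-1$, $\mathcal{N}_i=\{b\in\mathcal{B}: \mathrm{lev}_j(b)\le j\text{ for some integer } -1\le j\le i\}$, and $\mathcal{L}_i=\mathcal{N}_i\setminus\mathcal{N}_{i-1}$ for $i\ge0$. *)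

theory Defs
  imports Complex_Main
begin

(* A partition Lambda = (lambda_j)_{j>=1} is represented by a function nat => nat;
   index 0 is unused and required to be 0. *)
definition Part :: "nat \<Rightarrow> (nat \<Rightarrow> nat) set" where
  "Part k = {\<Lambda>. \<Lambda> 0 = 0 \<and> (\<forall>j>k. \<Lambda> j = 0)}"

definition wt :: "(nat \<Rightarrow> nat) \<Rightarrow> nat" where
  "wt \<Lambda> = (\<Sum>j\<in>{j. \<Lambda> j \<noteq> 0}. j * \<Lambda> j)"

definition deg :: "(nat \<Rightarrow> nat) \<Rightarrow> nat" where
  "deg \<Lambda> = (\<Sum>j\<in>{j. \<Lambda> j \<noteq> 0}. \<Lambda> j)"

(* basis element x^Lambda \<partial>_k represented as the pair (Lambda, k) *)
definition B :: "nat \<Rightarrow> ((nat \<Rightarrow> nat) \<times> nat) set" where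
  "B n = {(\<Lambda>, k). 1 \<le> k \<and> k \<le> n \<and> \<Lambda> \<in> Part (k - 1)}"

definition Bu :: "nat \<Rightarrow> nat \<Rightarrow> ((nat \<Rightarrow> nat) \<times> nat) set" where
  "Bu n u = {b \<in> B n. snd b = u}"

(* r_i in {1..n-1} with i = r_i mod (n-1) *)
definition r :: "nat \<Rightarrow> int \<Rightarrow> int" where
  "r n i = (i - 1) mod (int n - 1) + 1"

definition h :: "nat \<Rightarrow> int \<Rightarrow> int" where
  "h n i = \<lfloor>of_int (i - 1) / (of_int (int n - 1) :: real)\<rfloor> + 1"

definition WD :: "nat \<Rightarrow> (nat \<Rightarrow> nat) \<times> nat \<Rightarrow> int" where
  "WD n b = int (wt (fst b)) - int (deg (fst b)) + int n - int (snd b)"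

definition lev :: "nat \<Rightarrow> int \<Rightarrow> (nat \<Rightarrow> nat) \<times> nat \<Rightarrow> int" where
  "lev n i b = h n i * WD n b + int (deg (fst b)) - 1"

definition N :: "nat \<Rightarrow> int \<Rightarrow> ((nat \<Rightarrow> nat) \<times> nat) set" where
  "N n i = {b \<in> B n. \<exists>j::int. -1 \<le> j \<and> j \<le> i \<and> lev n j b \<le> j}"

definition L :: "nat \<Rightarrow> int \<Rightarrow> ((nat \<Rightarrow> nat) \<times> nat) set" where
  "L n i = N n i - N n (i - 1)"

end

theory Submission
  imports Defs
begin

text \<open>Write \<open>m = n - 1\<close>, so that \<open>i = (h\<^sub>i - 1) m + r\<^sub>i\<close>. Since \<open>lev\<^sub>j b\<close> is affine in
  \<open>h\<^sub>j\<close> with slope \<open>WD b\<close>, passing from \<open>i\<close> to \<open>j = (h\<^sub>i - 1) m\<close> lowers the level by \<open>WD b\<close>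
  and the index by \<open>r\<^sub>i\<close>. Hence \<open>WD b \<ge> r\<^sub>i\<close> together with \<open>lev\<^sub>i b \<le> i\<close> would give
  \<open>lev\<^sub>j b \<le> j\<close> for some \<open>j < i\<close>, i.e. \<open>b \<in> \<N>\<^sub>i\<^sub>-\<^sub>1\<close>. For \<open>i = 0\<close> no such \<open>j \<ge> -1\<close> exists;
  instead \<open>h\<^sub>0 = h\<^sub>-\<^sub>1 = 0\<close> forces \<open>deg b = 1\<close>, which bounds \<open>WD b\<close> directly.
  The second claim follows because \<open>WD (x\<^sup>\<Lambda>\<partial>\<^sub>k) \<ge> n - k\<close>.\<close>

lemma deg_le_wt:
  assumes "\<Lambda> 0 = 0"
  shows "deg \<Lambda> \<le> wt \<Lambda>"
  unfolding deg_def wt_def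
proof (rule sum_mono)
  fix j assume "j \<in> {j. \<Lambda> j \<noteq> 0}"
  with assms have "1 \<le> j" by (cases j) auto
  then show "\<Lambda> j \<le> j * \<Lambda> j" by simp
qed

lemma wt_le_mult_deg:
  assumes "\<And>j. k < j \<Longrightarrow> \<Lambda> j = 0"
  shows "wt \<Lambda> \<le> k * deg \<Lambda>"
proof -
  have "wt \<Lambda> \<le> (\<Sum>j\<in>{j. \<Lambda> j \<noteq> 0}. k * \<Lambda> j)"
    unfolding wt_def
  proof (rule sum_mono)
    fix j assume "j \<in> {j. \<Lambda> j \<noteq> 0}"
    with assms have "j \<le> k" by (meson mem_Collect_eq not_le)
    then show "j * \<Lambda> j \<le> k * \<Lambda> j" by simp
  qed
  also have "\<dots> = k * deg \<Lambda>" unfolding deg_def by (simp add: sum_distrib_left)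
  finally show ?thesis .
qed

lemma WD_ge_diff:
  assumes "(\<Lambda>, k) \<in> B n"
  shows "int n - int k \<le> WD n (\<Lambda>, k)"
proof -
  have "\<Lambda> 0 = 0" using assms by (simp add: B_def Part_def)
  then show ?thesis using deg_le_wt[of \<Lambda>] by (simp add: WD_def)
qed

lemma WD_le_if_deg_one:
  assumes "(\<Lambda>, k) \<in> B n" and "deg \<Lambda> = 1"
  shows "WD n (\<Lambda>, k) \<le> int n - 2"
proof -
  have k: "1 \<le> k" and "\<And>j. k - 1 < j \<Longrightarrow> \<Lambda> j = 0"
    using assms(1) by (auto simp: B_def Part_def)
  then have "wt \<Lambda> \<le> k - 1" using wt_le_mult_deg[of "k - 1" \<Lambda>] assms(2) by simp
  with k assms(2) show ?thesis by (simp add: WD_def)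
qed

lemma h_eq_div:
  assumes "2 \<le> n"
  shows "h n i = (i - 1) div (int n - 1) + 1"
  using assms floor_divide_of_int_eq[of "i - 1" "int n - 1"] by (simp add: h_def)

lemma r_ge_1:
  assumes "2 \<le> n"
  shows "1 \<le> r n i"
  using assms by (simp add: r_def)

lemma h_r_decomp:
  assumes "2 \<le> n"
  shows "i = (h n i - 1) * (int n - 1) + r n i"
  using assms div_mult_mod_eq[of "i - 1" "int n - 1"] by (simp add: h_eq_div r_def)

lemma h_mult:
  assumes "2 \<le> n"
  shows "h n (q * (int n - 1)) = q"
proof -
  have "(q * (int n - 1) - 1) div (int n - 1) = ((int n - 2) + (q - 1) * (int n - 1)) div (int n - 1)"
    by (simp add: algebra_simps)
  also have "\<dots> = q - 1"
    using assms by (subst div_mult_self1) simp_all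
  finally show ?thesis using assms by (simp add: h_eq_div)
qed

lemma h_eq_0:
  assumes "2 \<le> n" and "2 - int n \<le> i" and "i \<le> 0"
  shows "h n i = 0"
proof -
  have "(i - 1) div (int n - 1) = -1"
    using assms by (smt (verit) div_minus_minus div_pos_neg_trivial)
  then show ?thesis using assms(1) by (simp add: h_eq_div)
qed

lemma r_0:
  assumes "2 \<le> n"
  shows "r n 0 = int n - 1"
  using assms h_r_decomp[of n 0] by (simp add: h_eq_0)

lemma lev_shift:
  "lev n i b = lev n j b + (h n i - h n j) * WD n b"
  by (simp add: lev_def algebra_simps)

lemma L_memD:
  assumes "b \<in> L n i"
  shows "b \<in> B n" and "lev n i b \<le> i" and "\<And>j. -1 \<le> j \<Longrightarrow> j < i \<Longrightarrow> j < lev n j b"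
proof -
  from assms have N: "b \<in> N n i" and notN: "b \<notin> N n (i - 1)" by (auto simp: L_def)
  then show "b \<in> B n" by (simp add: N_def)
  show lower: "j < lev n j b" if "-1 \<le> j" "j < i" for j
    using that notN \<open>b \<in> B n\<close> by (fastforce simp: N_def)
  from N obtain j where "-1 \<le> j" "j \<le> i" "lev n j b \<le> j"
    by (auto simp: N_def)
  then show "lev n i b \<le> i" using lower by (cases "j = i") force+
qed

lemma WD_less_r_if_L_pos:
  assumes n: "2 \<le> n" and i: "1 \<le> i" and b: "b \<in> L n i"
  shows "WD n b < r n i"
proof (rule ccontr)
  assume "\<not> WD n b < r n i"
  define j where "j = (h n i - 1) * (int n - 1)"
  have i_eq: "i = j + r n i" using h_r_decomp[OF n] by (simp add: j_def)
  have "h n j = h n i - 1" using h_mult[OF n] by (simp add: j_def)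
  then have "lev n j b = lev n i b - WD n b" using lev_shift[of n i b j] by simp
  also have "\<dots> \<le> j" using L_memD(2)[OF b] i_eq \<open>\<not> WD n b < r n i\<close> by simp
  finally have "lev n j b \<le> j" .
  moreover have "0 \<le> h n i - 1" using n i by (simp add: h_eq_div pos_imp_zdiv_nonneg_iff)
  then have "0 \<le> j" unfolding j_def using n by (intro mult_nonneg_nonneg) simp_all
  then have "-1 \<le> j" by simp
  moreover have "j < i" using i_eq r_ge_1[OF n, of i] by linarith
  ultimately show False using L_memD(3)[OF b] by fastforce
qed

lemma deg_eq_1_if_L_0:
  assumes n: "3 \<le> n" and b: "(\<Lambda>, k) \<in> L n 0"
  shows "deg \<Lambda> = 1"
proof -
  have "lev n 0 (\<Lambda>, k) \<le> 0" by (rule L_memD(2)[OF b])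
  moreover have "-1 < lev n (-1) (\<Lambda>, k)" by (rule L_memD(3)[OF b]) simp_all
  moreover have "h n 0 = 0" and "h n (-1) = 0" using n by (simp_all add: h_eq_0)
  ultimately show ?thesis by (simp add: lev_def)
qed

lemma WD_less_r_if_L:
  assumes n: "3 \<le> n" and i: "0 \<le> i" and b: "(\<Lambda>, k) \<in> L n i"
  shows "WD n (\<Lambda>, k) < r n i"
proof (cases "i = 0")
  case True
  then have "deg \<Lambda> = 1" using deg_eq_1_if_L_0 n b by simp
  then have "WD n (\<Lambda>, k) \<le> int n - 2" using WD_le_if_deg_one L_memD(1)[OF b] by blast
  then show ?thesis using True n r_0 by simp
next
  case False
  then show ?thesis using WD_less_r_if_L_pos n i b by simp
qed

theorem proposition2p9:
  fixes n :: nat and i :: int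
  assumes "n \<ge> 3" and "i \<ge> 0"
  shows "(\<forall>\<Lambda> k. (\<Lambda>, k) \<in> L n i \<longrightarrow> r n i > WD n (\<Lambda>, k))
       \<and> (\<forall>k::nat. 1 \<le> k \<and> int k < int n - r n i + 1 \<longrightarrow> L n i \<inter> Bu n k = {})"
proof (intro conjI allI impI)
  fix \<Lambda> k assume "(\<Lambda>, k) \<in> L n i"
  then show "r n i > WD n (\<Lambda>, k)" using WD_less_r_if_L assms by blast
next
  fix k :: nat assume k: "1 \<le> k \<and> int k < int n - r n i + 1"
  show "L n i \<inter> Bu n k = {}"
  proof (rule equals0I)
    fix b assume "b \<in> L n i \<inter> Bu n k"
    then obtain \<Lambda> where b: "(\<Lambda>, k) \<in> L n i" by (cases b) (auto simp: Bu_def)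
    then have "int n - int k \<le> WD n (\<Lambda>, k)" using WD_ge_diff L_memD(1) by blast
    moreover have "WD n (\<Lambda>, k) < r n i" using WD_less_r_if_L assms b by blast
    ultimately show False using k by simp
  qed
qed

end
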